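(* Define $c(2)=1$, $c(3)=2$, $c(4)=4$ and $c(n)=10-n$ for $n\ge 5$. For every $n\ge 2$ and every $\mathbf a\in\mathbb{R}^n$ with $N(\mathbf a)\ge 2$, $$Z(J_{n,2}J_{n,1}\mathbf a)\le \binom{n+1}{3}-nN(\mathbf a)+n+c(n).$$
   Context: For a real vector $\mathbf x$, $N(\mathbf x)$ and $Z(\mathbf x)$ denote the numbers of negative and zero components. For $d\ge 0$, $J_{n,d}$ is the matrix, with respect to the bases of degree-$d$ and degree-$(d+1)$ monomials in $x_1,\dots,x_n$ in left lexicographic order, of the linear map $A(x)\mapsto A(x)(x_1+\cdots+x_n)$. Thus $J_{n,2}J_{n,1}\mathbf a$ is the coefficient vector of $(a_1x_1+\cdots+a_nx_n)(x_1+\cdots+x_n)^2$. *)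

theory Defs
  imports Complex_Main
begin

text \<open>Coefficient vectors are functions on monomials; the ordering of the basis
  (left lexicographic) is irrelevant for counting zero components.\<close>

definition mons :: "nat \<Rightarrow> nat \<Rightarrow> (nat \<Rightarrow> nat) set" where
  "mons n d = {\<alpha>. (\<forall>i\<ge>n. \<alpha> i = 0) \<and> (\<Sum>i<n. \<alpha> i) = d}"

text \<open>Matrix J_{n,d}: entry (beta, alpha) is 1 iff beta = alpha + e_i for some i,
  i.e. the matrix of multiplication by (x_1 + ... + x_n).\<close>
definition Jmat :: "nat \<Rightarrow> nat \<Rightarrow> (nat \<Rightarrow> nat) \<Rightarrow> (nat \<Rightarrow> nat) \<Rightarrow> real" where
  "Jmat n d \<beta> \<alpha> =
     (if \<alpha> \<in> mons n d \<and> \<beta> \<in> mons n (Suc d) \<and> (\<exists>i<n. \<beta> = \<alpha>(i := Suc (\<alpha> i))) then 1 else 0)"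

definition Japply :: "nat \<Rightarrow> nat \<Rightarrow> ((nat \<Rightarrow> nat) \<Rightarrow> real) \<Rightarrow> ((nat \<Rightarrow> nat) \<Rightarrow> real)" where
  "Japply n d v = (\<lambda>\<beta>. \<Sum>\<alpha>\<in>mons n d. Jmat n d \<beta> \<alpha> * v \<alpha>)"

definition lin_vec :: "nat \<Rightarrow> (nat \<Rightarrow> real) \<Rightarrow> ((nat \<Rightarrow> nat) \<Rightarrow> real)" where
  "lin_vec n a = (\<lambda>\<alpha>. \<Sum>i<n. if \<alpha> = (\<lambda>j. if j = i then 1 else 0) then a i else 0)"

definition Nneg :: "nat \<Rightarrow> (nat \<Rightarrow> real) \<Rightarrow> nat" where
  "Nneg n a = card {i. i < n \<and> a i < 0}"

definition Zmon :: "nat \<Rightarrow> nat \<Rightarrow> ((nat \<Rightarrow> nat) \<Rightarrow> real) \<Rightarrow> nat" where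
  "Zmon n d v = card {\<beta> \<in> mons n d. v \<beta> = 0}"

definition cfun :: "nat \<Rightarrow> int" where
  "cfun n = (if n = 2 then 1 else if n = 3 then 2 else if n = 4 then 4 else 10 - int n)"

end

(*
  The coordinate of J_{n,2} J_{n,1} a at a cubic monomial x^beta is 2 <beta, a> / beta!, so the
  zero coordinates correspond to 3-multisets {x, y, z} of indices with a_x + a_y + a_z = 0.
  Let N, P, Z be the numbers of negative, positive and zero entries of a. Exactly
  binom(Z + 2, 3) of these multisets consist of zero indices; every other one contains a
  negative index i and a positive index j and is charged to the pair (i, j) and its third
  index k. Per pair, at most one multiset has k in {i, j}; if a_i + a_j = 0 the other choices
  of k are the Z zero indices, and otherwise k is either another negative index (at most
  N - 1 choices) or another positive one (at most P - 1), each such multiset arising from two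
  pairs. Hence the number T of zero-sum multisets satisfies
  2 T <= 2 binom(Z + 2, 3) + 2 N P + N P max (N - 1, P - 1, 2 Z), and the theorem
  becomes a polynomial inequality in N, P, Z: an explicit sum of nonnegative products for
  n >= 5, and a finite check for n <= 4.
*)
theory Submission
  imports Defs "HOL-Library.Multiset"
begin

lemma sum_fun_upd_add:
  fixes f :: "'a \<Rightarrow> 'b::comm_monoid_add"
  assumes "finite A" "i \<in> A"
  shows "(\<Sum>l\<in>A. (f(i := x)) l) + f i = (\<Sum>l\<in>A. f l) + x"
proof -
  have "(\<Sum>l\<in>A - {i}. (f(i := x)) l) = (\<Sum>l\<in>A - {i}. f l)"
    by (rule sum.cong) auto
  then show ?thesis
    using assms by (simp add: sum.remove ac_simps)
qed

lemma mons_decrement: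
  assumes "\<beta> \<in> mons n (Suc d)" "i < n" "0 < \<beta> i"
  shows "\<beta>(i := \<beta> i - 1) \<in> mons n d"
  using assms sum_fun_upd_add[of "{..<n}" i \<beta> "\<beta> i - 1"] unfolding mons_def by auto

lemma finite_mons: "finite (mons n d)"
proof (rule finite_subset)
  show "mons n d \<subseteq> {\<alpha>. \<forall>i. (i \<in> {..<n} \<longrightarrow> \<alpha> i \<in> {..d}) \<and> (i \<notin> {..<n} \<longrightarrow> \<alpha> i = 0)}"
    unfolding mons_def by (auto intro: member_le_sum)
qed (intro finite_set_of_finite_funs; simp)

lemma Japply_eq_sum_decrements:
  assumes "\<beta> \<in> mons n (Suc d)"
  shows "Japply n d v \<beta> = (\<Sum>i | i < n \<and> 0 < \<beta> i. v (\<beta>(i := \<beta> i - 1)))"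
proof -
  let ?I = "{i. i < n \<and> 0 < \<beta> i}"
  let ?lower = "\<lambda>i. \<beta>(i := \<beta> i - 1)"
  have "Japply n d v \<beta> = (\<Sum>\<alpha>\<in>mons n d. if \<exists>i<n. \<beta> = \<alpha>(i := Suc (\<alpha> i)) then v \<alpha> else 0)"
    unfolding Japply_def Jmat_def using assms by (intro sum.cong) auto
  also have "\<dots> = (\<Sum>\<alpha> | \<alpha> \<in> mons n d \<and> (\<exists>i<n. \<beta> = \<alpha>(i := Suc (\<alpha> i))). v \<alpha>)"
    by (simp add: sum.inter_filter finite_mons)
  also have "{\<alpha>. \<alpha> \<in> mons n d \<and> (\<exists>i<n. \<beta> = \<alpha>(i := Suc (\<alpha> i)))} = ?lower ` ?I"
    using mons_decrement[OF assms] by fastforce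
  also have "(\<Sum>\<alpha>\<in>?lower ` ?I. v \<alpha>) = (\<Sum>i\<in>?I. v (?lower i))"
  proof (rule sum.reindex_cong)
    show "inj_on ?lower ?I"
      by (rule inj_onI) (metis diff_less fun_upd_apply less_numeral_extra(1) nat_neq_iff mem_Collect_eq)
  qed auto
  finally show ?thesis .
qed

definition mon_fact :: "nat \<Rightarrow> (nat \<Rightarrow> nat) \<Rightarrow> real" where
  "mon_fact n \<beta> = (\<Prod>i<n. fact (\<beta> i))"

definition mon_dot :: "nat \<Rightarrow> (nat \<Rightarrow> real) \<Rightarrow> (nat \<Rightarrow> nat) \<Rightarrow> real" where
  "mon_dot n a \<beta> = (\<Sum>i<n. real (\<beta> i) * a i)"

lemma mon_fact_pos: "0 < mon_fact n \<beta>"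
  unfolding mon_fact_def by (intro prod_pos) auto

lemma mon_fact_decrement:
  assumes "i < n" "0 < \<beta> i"
  shows "mon_fact n (\<beta>(i := \<beta> i - 1)) * real (\<beta> i) = mon_fact n \<beta>"
proof -
  have "(\<Prod>l\<in>{..<n} - {i}. (fact ((\<beta>(i := \<beta> i - 1)) l) :: real)) = (\<Prod>l\<in>{..<n} - {i}. fact (\<beta> l))"
    by (rule prod.cong) auto
  moreover have "(fact (\<beta> i) :: real) = real (\<beta> i) * fact (\<beta> i - 1)"
    using assms(2) by (metis Suc_diff_1 fact_Suc of_nat_Suc)
  ultimately show ?thesis
    using assms unfolding mon_fact_def by (simp add: prod.remove[of "{..<n}" i] ac_simps)
qed

lemma mon_dot_decrement:
  assumes "i < n" "0 < \<beta> i"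
  shows "mon_dot n a (\<beta>(i := \<beta> i - 1)) = mon_dot n a \<beta> - a i"
proof -
  have "(\<Sum>l\<in>{..<n} - {i}. real ((\<beta>(i := \<beta> i - 1)) l) * a l) = (\<Sum>l\<in>{..<n} - {i}. real (\<beta> l) * a l)"
    by (rule sum.cong) auto
  then show ?thesis
    using assms unfolding mon_dot_def by (simp add: sum.remove[of "{..<n}" i] of_nat_diff algebra_simps)
qed

text \<open>The coefficient of \<open>x\<^sup>\<beta>\<close> in \<open>(a\<^sub>1x\<^sub>1 + \<dots> + a\<^sub>nx\<^sub>n)(x\<^sub>1 + \<dots> + x\<^sub>n)\<^sup>d\<close> is
  \<open>d! \<langle>\<beta>, a\<rangle> / \<beta>!\<close>; this is the induction step in \<open>d\<close>.\<close>

lemma Japply_mon_dot: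
  assumes v: "\<And>\<gamma>. \<gamma> \<in> mons n d \<Longrightarrow> v \<gamma> = K / mon_fact n \<gamma> * mon_dot n a \<gamma>"
    and \<beta>: "\<beta> \<in> mons n (Suc d)"
  shows "Japply n d v \<beta> = K * real d / mon_fact n \<beta> * mon_dot n a \<beta>"
proof -
  let ?I = "{i. i < n \<and> 0 < \<beta> i}"
  have "Japply n d v \<beta> = (\<Sum>i\<in>?I. v (\<beta>(i := \<beta> i - 1)))"
    by (rule Japply_eq_sum_decrements[OF \<beta>])
  also have "\<dots> = (\<Sum>i\<in>?I. K / mon_fact n \<beta> * (real (\<beta> i) * (mon_dot n a \<beta> - a i)))"
  proof (rule sum.cong)
    fix i assume i: "i \<in> ?I"
    have "mon_fact n (\<beta>(i := \<beta> i - 1)) = mon_fact n \<beta> / real (\<beta> i)"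
      using mon_fact_decrement[of i n \<beta>] i by (simp add: field_simps)
    then show "v (\<beta>(i := \<beta> i - 1)) = K / mon_fact n \<beta> * (real (\<beta> i) * (mon_dot n a \<beta> - a i))"
      using v[OF mons_decrement[OF \<beta>]] mon_dot_decrement[of i n \<beta> a] i by simp
  qed simp
  also have "\<dots> = (\<Sum>i<n. K / mon_fact n \<beta> * (real (\<beta> i) * (mon_dot n a \<beta> - a i)))"
    by (rule sum.mono_neutral_left) auto
  also have "\<dots> = K / mon_fact n \<beta> * (\<Sum>i<n. real (\<beta> i) * mon_dot n a \<beta> - real (\<beta> i) * a i)"
    by (simp add: sum_distrib_left right_diff_distrib)
  also have "(\<Sum>i<n. real (\<beta> i) * mon_dot n a \<beta> - real (\<beta> i) * a i)
      = (\<Sum>i<n. real (\<beta> i)) * mon_dot n a \<beta> - mon_dot n a \<beta>"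
    by (simp only: sum_subtractf sum_distrib_right[symmetric]) (simp add: mon_dot_def)
  also have "(\<Sum>i<n. real (\<beta> i)) = real (Suc d)"
    using \<beta> unfolding mons_def by (simp flip: of_nat_sum)
  finally show ?thesis
    by (simp add: algebra_simps)
qed

lemma mons_1_cases:
  assumes "\<gamma> \<in> mons n 1"
  obtains k where "k < n" "\<gamma> = (\<lambda>j. if j = k then 1 else 0)"
proof -
  have sum: "(\<Sum>l<n. \<gamma> l) = 1" and out: "\<forall>i\<ge>n. \<gamma> i = 0"
    using assms unfolding mons_def by auto
  then obtain k where k: "k < n" "\<gamma> k \<noteq> 0"
    by (metis lessThan_iff sum.neutral zero_neq_one)
  moreover have "\<gamma> k + (\<Sum>l\<in>{..<n} - {k}. \<gamma> l) = 1"
    using sum k by (simp add: sum.remove)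
  ultimately have "\<gamma> k = 1" "(\<Sum>l\<in>{..<n} - {k}. \<gamma> l) = 0"
    by linarith+
  then have "\<gamma> j = (if j = k then 1 else 0)" for j
    using out by (cases "j < n") auto
  then have "\<gamma> = (\<lambda>j. if j = k then 1 else 0)" ..
  with k show thesis
    using that by blast
qed

lemma lin_vec_mon_dot:
  assumes "\<gamma> \<in> mons n 1"
  shows "lin_vec n a \<gamma> = 1 / mon_fact n \<gamma> * mon_dot n a \<gamma>"
proof -
  obtain k where k: "k < n" and \<gamma>: "\<gamma> = (\<lambda>j. if j = k then 1 else 0)"
    using mons_1_cases[OF assms] .
  have unit_eq: "((\<lambda>j. if j = k then 1 else 0) = (\<lambda>j. if j = i then (1::nat) else 0)) \<longleftrightarrow> i = k" for i
    by (metis zero_neq_one)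
  have "lin_vec n a \<gamma> = (\<Sum>i<n. if i = k then a i else 0)"
    unfolding lin_vec_def \<gamma> unit_eq ..
  moreover have "mon_fact n \<gamma> = 1"
    unfolding mon_fact_def \<gamma> by (intro prod.neutral) auto
  moreover have "mon_dot n a \<gamma> = (\<Sum>i<n. if i = k then a i else 0)"
    unfolding mon_dot_def \<gamma> by (intro sum.cong) auto
  ultimately show ?thesis
    using k by simp
qed

lemma J2_J1_lin_vec:
  assumes "\<beta> \<in> mons n 3"
  shows "Japply n 2 (Japply n 1 (lin_vec n a)) \<beta> = 2 / mon_fact n \<beta> * mon_dot n a \<beta>"
proof -
  have "Japply n 1 (lin_vec n a) \<gamma> = 1 / mon_fact n \<gamma> * mon_dot n a \<gamma>" if "\<gamma> \<in> mons n 2" for \<gamma>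
    using Japply_mon_dot[of n 1 "lin_vec n a" 1 a \<gamma>] lin_vec_mon_dot that by (simp add: numeral_2_eq_2)
  then show ?thesis
    using Japply_mon_dot[of n 2 _ 1 a \<beta>] assms by (simp add: numeral_3_eq_3)
qed

lemma Zmon_J2_J1_lin_vec:
  "Zmon n 3 (Japply n 2 (Japply n 1 (lin_vec n a))) = card {\<beta> \<in> mons n 3. mon_dot n a \<beta> = 0}"
  unfolding Zmon_def using J2_J1_lin_vec mon_fact_pos
  by (metis (no_types, lifting) divide_eq_0_iff mult_eq_0_iff zero_neq_numeral less_irrefl)

definition mset_of_mon :: "nat \<Rightarrow> (nat \<Rightarrow> nat) \<Rightarrow> nat multiset" where
  "mset_of_mon n \<beta> = (\<Sum>i<n. replicate_mset (\<beta> i) i)"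

lemma count_mset_of_mon: "count (mset_of_mon n \<beta>) x = (if x < n then \<beta> x else 0)"
  unfolding mset_of_mon_def count_sum by (simp add: count_replicate_mset)

lemma size_mset_of_mon: "size (mset_of_mon n \<beta>) = (\<Sum>i<n. \<beta> i)"
  unfolding mset_of_mon_def by (induction n) auto

lemma sum_mset_of_mon: "sum_mset (image_mset a (mset_of_mon n \<beta>)) = mon_dot n a \<beta>"
  unfolding mset_of_mon_def mon_dot_def by (induction n) auto

lemma set_mset_of_mon: "set_mset (mset_of_mon n \<beta>) \<subseteq> {..<n}"
proof
  fix x assume "x \<in># mset_of_mon n \<beta>"
  then have "0 < count (mset_of_mon n \<beta>) x"
    by simp
  then show "x \<in> {..<n}"
    unfolding count_mset_of_mon by (simp split: if_splits)
qed

lemma inj_on_mset_of_mon: "inj_on (mset_of_mon n) (mons n d)"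
proof (rule inj_onI, rule ext)
  fix \<beta> \<gamma> x
  assume mons: "\<beta> \<in> mons n d" "\<gamma> \<in> mons n d" and eq: "mset_of_mon n \<beta> = mset_of_mon n \<gamma>"
  have "count (mset_of_mon n \<beta>) x = count (mset_of_mon n \<gamma>) x"
    using eq by simp
  then show "\<beta> x = \<gamma> x"
    using mons unfolding count_mset_of_mon mons_def by (auto split: if_splits)
qed

lemma card_mons_mon_dot_zero_le:
  "card {\<beta> \<in> mons n d. mon_dot n a \<beta> = 0}
     \<le> card {M \<in> multisets_of_size {..<n} d. sum_mset (image_mset a M) = 0}"
proof (rule card_inj_on_le)
  show "inj_on (mset_of_mon n) {\<beta> \<in> mons n d. mon_dot n a \<beta> = 0}"
    using inj_on_mset_of_mon by (rule inj_on_subset) auto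
  show "mset_of_mon n ` {\<beta> \<in> mons n d. mon_dot n a \<beta> = 0}
      \<subseteq> {M \<in> multisets_of_size {..<n} d. sum_mset (image_mset a M) = 0}"
    using set_mset_of_mon by (auto simp: multisets_of_size_def size_mset_of_mon sum_mset_of_mon mons_def)
  show "finite {M \<in> multisets_of_size {..<n} d. sum_mset (image_mset a M) = 0}"
    by (rule finite_subset[OF _ finite_multisets_of_size]) auto
qed

lemma card_image_le_half:
  assumes "finite A"
    and "\<And>x. x \<in> A \<Longrightarrow> \<sigma> x \<in> A \<and> \<sigma> x \<noteq> x \<and> f (\<sigma> x) = f x"
  shows "2 * card (f ` A) \<le> card A"
proof -
  have fibre: "2 \<le> card {x \<in> A. f x = y}" if y: "y \<in> f ` A" for y
  proof -
    obtain x where x: "x \<in> A" "f x = y"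
      using y by blast
    then have "{x, \<sigma> x} \<subseteq> {x \<in> A. f x = y}"
      using assms(2) by auto
    moreover have "card {x, \<sigma> x} = 2"
      using assms(2)[OF x(1)] by (auto simp: card_insert_if)
    ultimately show ?thesis
      using assms(1) card_mono[of "{x \<in> A. f x = y}" "{x, \<sigma> x}"] by simp
  qed
  have "2 * card (f ` A) = (\<Sum>y\<in>f ` A. 2)"
    by simp
  also have "\<dots> \<le> (\<Sum>y\<in>f ` A. card {x \<in> A. f x = y})"
    by (rule sum_mono) (rule fibre)
  also have "\<dots> = card A"
    using sum.image_gen[OF assms(1), of "\<lambda>_. 1 :: nat" f] by (simp flip: card_eq_sum)
  finally show ?thesis .
qed

lemma size_3_mset_cases:
  assumes "size M = 3"
  obtains x y z where "M = {#x, y, z#}"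
proof -
  obtain x M' where M: "M = add_mset x M'"
    using size_eq_Suc_imp_eq_union[of M 2] assms by auto
  then obtain y M'' where M': "M' = add_mset y M''"
    using size_eq_Suc_imp_eq_union[of M' 1] assms by auto
  then obtain z where "M'' = {#z#}"
    using size_1_singleton_mset[of M''] M assms by auto
  then show thesis
    using that M M' by blast
qed

fun triple_mset :: "('a \<times> 'a) \<times> 'a \<Rightarrow> 'a multiset" where
  "triple_mset ((i, j), k) = {#i, j, k#}"

context
  fixes n :: nat and a :: "nat \<Rightarrow> real"
begin

definition negs :: "nat set" where
  "negs = {i. i < n \<and> a i < 0}"

definition poss :: "nat set" where
  "poss = {i. i < n \<and> 0 < a i}"

definition zeros :: "nat set" where
  "zeros = {i. i < n \<and> a i = 0}"

definition zero_sum_triples :: "nat multiset set" where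
  "zero_sum_triples = {M \<in> multisets_of_size {..<n} 3. sum_mset (image_mset a M) = 0}"

definition neg_thirds :: "nat \<Rightarrow> nat \<Rightarrow> nat set" where
  "neg_thirds i j = {k \<in> negs. k \<noteq> i \<and> a i + a j + a k = 0}"

definition pos_thirds :: "nat \<Rightarrow> nat \<Rightarrow> nat set" where
  "pos_thirds i j = {k \<in> poss. k \<noteq> j \<and> a i + a j + a k = 0}"

definition zero_thirds :: "nat \<Rightarrow> nat \<Rightarrow> nat set" where
  "zero_thirds i j = {k \<in> zeros. a i + a j = 0}"

definition neg_triples :: "((nat \<times> nat) \<times> nat) set" where
  "neg_triples = Sigma (negs \<times> poss) (case_prod neg_thirds)"

definition pos_triples :: "((nat \<times> nat) \<times> nat) set" where
  "pos_triples = Sigma (negs \<times> poss) (case_prod pos_thirds)"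

definition zero_triples :: "((nat \<times> nat) \<times> nat) set" where
  "zero_triples = Sigma (negs \<times> poss) (case_prod zero_thirds)"

definition repeated_mset :: "nat \<Rightarrow> nat \<Rightarrow> nat multiset" where
  "repeated_mset i j = (if 2 * a i + a j = 0 then {#i, i, j#} else {#i, j, j#})"

lemma card_negs_poss_zeros: "card negs + card poss + card zeros = n"
proof -
  have "{..<n} = (negs \<union> poss) \<union> zeros"
    unfolding negs_def poss_def zeros_def by auto
  then have "card {..<n} = card (negs \<union> poss) + card zeros"
    by (simp add: card_Un_disjoint negs_def poss_def zeros_def disjoint_iff)
  also have "card (negs \<union> poss) = card negs + card poss"
    by (rule card_Un_disjoint) (auto simp: negs_def poss_def)
  finally show ?thesis
    by simp
qed

lemma finite_sign_sets: "finite negs" "finite poss" "finite zeros"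
  unfolding negs_def poss_def zeros_def by auto

lemma finite_triples: "finite neg_triples" "finite pos_triples" "finite zero_triples"
  using finite_sign_sets
  unfolding neg_triples_def pos_triples_def zero_triples_def neg_thirds_def pos_thirds_def zero_thirds_def
  by auto

lemma zero_sum_neg_pos_mset:
  assumes "x < n" "y < n" "z < n" "a x < 0" "0 < a y" "a x + a y + a z = 0"
  shows "{#x, y, z#} \<in> case_prod repeated_mset ` (negs \<times> poss) \<union> triple_mset ` zero_triples
     \<union> triple_mset ` neg_triples \<union> triple_mset ` pos_triples"
proof -
  have xy: "(x, y) \<in> negs \<times> poss"
    using assms by (simp add: negs_def poss_def)
  consider "a z = 0" | "z = x" | "z = y" | "a z < 0" "z \<noteq> x" | "0 < a z" "z \<noteq> y"
    by linarith
  then show ?thesis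
  proof cases
    case 1
    then have "((x, y), z) \<in> zero_triples"
      using xy assms by (simp add: zero_triples_def zero_thirds_def zeros_def)
    then show ?thesis
      by (metis UnI1 UnI2 image_eqI triple_mset.simps)
  next
    case 2
    then have "repeated_mset x y = {#x, y, z#}"
      using assms by (simp add: repeated_mset_def add_mset_commute)
    then show ?thesis
      using xy by (metis UnI1 case_prod_conv image_eqI)
  next
    case 3
    then have "repeated_mset x y = {#x, y, z#}"
      using assms by (simp add: repeated_mset_def)
    then show ?thesis
      using xy by (metis UnI1 case_prod_conv image_eqI)
  next
    case 4
    then have "((x, y), z) \<in> neg_triples"
      using xy assms by (simp add: neg_triples_def neg_thirds_def negs_def)
    then show ?thesis
      by (metis UnI1 UnI2 image_eqI triple_mset.simps)
  next
    case 5
    then have "((x, y), z) \<in> pos_triples"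
      using xy assms by (simp add: pos_triples_def pos_thirds_def poss_def)
    then show ?thesis
      by (metis UnI2 image_eqI triple_mset.simps)
  qed
qed

lemma zero_sum_triples_subset:
  "zero_sum_triples \<subseteq> multisets_of_size zeros 3 \<union> case_prod repeated_mset ` (negs \<times> poss)
     \<union> triple_mset ` zero_triples \<union> triple_mset ` neg_triples \<union> triple_mset ` pos_triples"
  (is "_ \<subseteq> ?rhs")
proof
  fix M assume "M \<in> zero_sum_triples"
  then have size: "size M = 3" and set: "set_mset M \<subseteq> {..<n}" and sum: "sum_mset (image_mset a M) = 0"
    unfolding zero_sum_triples_def multisets_of_size_def by auto
  obtain x y z where M: "M = {#x, y, z#}"
    using size_3_mset_cases[OF size] .
  have neg_pos: "M \<in> ?rhs" if "M = {#u, v, w#}" "a u < 0" "0 < a v" for u v w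
  proof -
    have "u < n" "v < n" "w < n" "a u + a v + a w = 0"
      using set sum unfolding \<open>M = {#u, v, w#}\<close> by (auto simp: algebra_simps)
    then show ?thesis
      using zero_sum_neg_pos_mset[of u v w] that by blast
  qed
  have perms: "M = {#x, z, y#}" "M = {#y, x, z#}" "M = {#y, z, x#}" "M = {#z, x, y#}" "M = {#z, y, x#}"
    unfolding M by (simp_all add: add_mset_commute)
  have "a x + a y + a z = 0"
    using sum unfolding M by (simp add: algebra_simps)
  then consider "a x = 0" "a y = 0" "a z = 0" | "a x < 0" "0 < a y" | "a x < 0" "0 < a z"
    | "a y < 0" "0 < a x" | "a y < 0" "0 < a z" | "a z < 0" "0 < a x" | "a z < 0" "0 < a y"
    by linarith
  then show "M \<in> ?rhs"
  proof cases
    case 1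
    then have "set_mset M \<subseteq> zeros"
      using set unfolding M by (auto simp: zeros_def)
    then show ?thesis
      using size by (simp add: multisets_of_size_def)
  next
    case 2 then show ?thesis using neg_pos M by blast
  next
    case 3 then show ?thesis using neg_pos perms(1) by blast
  next
    case 4 then show ?thesis using neg_pos perms(2) by blast
  next
    case 5 then show ?thesis using neg_pos perms(3) by blast
  next
    case 6 then show ?thesis using neg_pos perms(4) by blast
  next
    case 7 then show ?thesis using neg_pos perms(5) by blast
  qed
qed

text \<open>For a fixed pair \<open>(i, j)\<close> with \<open>a\<^sub>i + a\<^sub>j \<noteq> 0\<close>, a negative and a positive third element
  cannot both exist, since they would have the same value \<open>-(a\<^sub>i + a\<^sub>j)\<close>.\<close>

lemma card_thirds_le:
  assumes "i \<in> negs" "j \<in> poss"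
  shows "card (neg_thirds i j) + card (pos_thirds i j) + 2 * card (zero_thirds i j)
    \<le> max (card negs - 1) (max (card poss - 1) (2 * card zeros))"
proof (cases "a i + a j = 0")
  case True
  then have "neg_thirds i j = {}" "pos_thirds i j = {}" "zero_thirds i j = zeros"
    by (auto simp: neg_thirds_def pos_thirds_def zero_thirds_def negs_def poss_def)
  then show ?thesis
    by simp
next
  case False
  then have zero: "zero_thirds i j = {}"
    by (simp add: zero_thirds_def)
  have "neg_thirds i j = {} \<or> pos_thirds i j = {}"
    by (fastforce simp: neg_thirds_def pos_thirds_def negs_def poss_def)
  moreover have "card (neg_thirds i j) \<le> card negs - 1"
    using assms finite_sign_sets card_mono[of "negs - {i}" "neg_thirds i j"]
    by (force simp: neg_thirds_def)
  moreover have "card (pos_thirds i j) \<le> card poss - 1"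
    using assms finite_sign_sets card_mono[of "poss - {j}" "pos_thirds i j"]
    by (force simp: pos_thirds_def)
  ultimately show ?thesis
    using zero by auto
qed

lemma card_zero_sum_triples_le:
  "2 * card zero_sum_triples \<le> 2 * ((card zeros + 2) choose 3) + 2 * (card negs * card poss)
     + card negs * card poss * max (card negs - 1) (max (card poss - 1) (2 * card zeros))"
proof -
  let ?m = "max (card negs - 1) (max (card poss - 1) (2 * card zeros))"
  let ?S1 = "multisets_of_size zeros 3" and ?S2 = "case_prod repeated_mset ` (negs \<times> poss)"
  let ?S3 = "triple_mset ` zero_triples" and ?S4 = "triple_mset ` neg_triples"
    and ?S5 = "triple_mset ` pos_triples"
  have "card zero_sum_triples \<le> card (?S1 \<union> ?S2 \<union> ?S3 \<union> ?S4 \<union> ?S5)"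
    using zero_sum_triples_subset finite_sign_sets finite_triples by (intro card_mono) auto
  also have "\<dots> \<le> card ?S1 + card ?S2 + card ?S3 + card ?S4 + card ?S5"
    using card_Un_le[of "?S1 \<union> ?S2 \<union> ?S3 \<union> ?S4" ?S5] card_Un_le[of "?S1 \<union> ?S2 \<union> ?S3" ?S4]
      card_Un_le[of "?S1 \<union> ?S2" ?S3] card_Un_le[of ?S1 ?S2] by linarith
  finally have union: "card zero_sum_triples \<le> card ?S1 + card ?S2 + card ?S3 + card ?S4 + card ?S5" .
  have S1: "card ?S1 = (card zeros + 2) choose 3"
    using card_multisets_of_size[OF finite_sign_sets(3), of 3] by simp
  have S2: "card ?S2 \<le> card negs * card poss"
    using card_image_le[of "negs \<times> poss"] finite_sign_sets by (simp add: card_cartesian_product)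
  have S3: "card ?S3 \<le> card zero_triples"
    using card_image_le finite_triples by blast
  have S4: "2 * card ?S4 \<le> card neg_triples"
    by (rule card_image_le_half[where \<sigma> = "\<lambda>((i, j), k). ((k, j), i)"])
      (use finite_triples in \<open>auto simp: neg_triples_def neg_thirds_def add_mset_commute algebra_simps\<close>)
  have S5: "2 * card ?S5 \<le> card pos_triples"
    by (rule card_image_le_half[where \<sigma> = "\<lambda>((i, j), k). ((i, k), j)"])
      (use finite_triples in \<open>auto simp: pos_triples_def pos_thirds_def add_mset_commute algebra_simps\<close>)
  have "2 * card zero_triples + card neg_triples + card pos_triples
      = (\<Sum>(i, j)\<in>negs \<times> poss. card (neg_thirds i j) + card (pos_thirds i j) + 2 * card (zero_thirds i j))"
    using finite_sign_sets finite_triples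
    by (simp add: zero_triples_def neg_triples_def pos_triples_def neg_thirds_def pos_thirds_def
        zero_thirds_def sum.distrib sum_distrib_left case_prod_beta)
  also have "\<dots> \<le> (\<Sum>(i, j)\<in>negs \<times> poss. ?m)"
    by (intro sum_mono) (clarify, rule card_thirds_le)
  also have "\<dots> = card negs * card poss * ?m"
    by (simp add: card_cartesian_product)
  finally show ?thesis
    using union S1 S2 S3 S4 S5 by linarith
qed

end

lemma mult_pred_nonneg_int: "0 \<le> (k::int) * (k - 1)"
  by (cases "k \<le> 0") (auto intro: mult_nonpos_nonpos)

lemma cubic_bound:
  fixes N P Z M n :: int
  assumes "2 \<le> N" "0 \<le> P" "0 \<le> Z" "n = N + P + Z"
    and "M = N - 1 \<or> M = P - 1 \<or> M = 2 * Z"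
  shows "Z * (Z + 1) * (Z + 2) + 6 * N * P + 3 * N * P * M \<le> (n + 1) * n * (n - 1) - 6 * n * N + 60"
proof -
  define A B C D where "A = Z * (Z - 1)" and "B = P * (P - 1)" and "C = (P - 1) * (P - 2)"
    and "D = (N - 4) * (N - 5)"
  have ABCD: "0 \<le> A" "0 \<le> B" "0 \<le> C" "0 \<le> D"
    unfolding A_def B_def C_def D_def
    using mult_pred_nonneg_int[of Z] mult_pred_nonneg_int[of P] mult_pred_nonneg_int[of "P - 1"]
      mult_pred_nonneg_int[of "N - 4"] by (simp_all add: algebra_simps)
  let ?gap = "(n + 1) * n * (n - 1) - 6 * n * N + 60 - (Z * (Z + 1) * (Z + 2) + 6 * N * P + 3 * N * P * M)"
  from assms(5) consider "M = N - 1" | "M = P - 1" | "M = 2 * Z"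
    by blast
  then have "0 \<le> ?gap"
  proof cases
    case 1
    have "?gap = 3 * N * Z * (N - 2) + 3 * A + 3 * Z * Z * (N - 2) + (P + 1) * B + 3 * N * C
        + (N + 3) * D + 3 * P * P * Z + 3 * P * Z * Z + 6 * N * P * Z"
      unfolding 1 A_def B_def C_def D_def assms(4) by (simp add: algebra_simps)
    also have "0 \<le> \<dots>"
      using assms ABCD by (intro add_nonneg_nonneg mult_nonneg_nonneg) auto
    finally show ?thesis .
  next
    case 2
    have "?gap = 3 * N * Z * (N - 2) + 3 * A + 3 * Z * Z * (N - 2) + (P + 3) * C + 6
        + 3 * P * (N - 2) * (N - 1) + 6 * (N - 2) + (N + 3) * D + 3 * P * P * Z + 3 * P * Z * Z
        + 6 * N * P * Z"
      unfolding 2 A_def B_def C_def D_def assms(4) by (simp add: algebra_simps)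
    also have "0 \<le> \<dots>"
      using assms ABCD by (intro add_nonneg_nonneg mult_nonneg_nonneg) auto
    finally show ?thesis .
  next
    case 3
    have "?gap = 3 * N * Z * (N - 2) + 3 * A + 3 * Z * Z * (N - 2) + (P + 1) * B + 3 * N * C
        + 3 * N * P * (N - 1) + (N + 3) * D + 3 * P * P * Z + 3 * P * Z * Z"
      unfolding 3 A_def B_def C_def D_def assms(4) by (simp add: algebra_simps)
    also have "0 \<le> \<dots>"
      using assms ABCD by (intro add_nonneg_nonneg mult_nonneg_nonneg) auto
    finally show ?thesis .
  qed
  then show ?thesis
    by simp
qed

lemma six_times_choose_3: "6 * ((k + 2) choose 3) = (k + 2) * (k + 1) * k"
proof (induction k)
  case (Suc k)
  have "2 * ((k + 2) choose 2) = (k + 2) * (k + 1)"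
    by (induction k) (auto simp: numeral_eq_Suc)
  moreover have "Suc k + 2 choose 3 = ((k + 2) choose 2) + ((k + 2) choose 3)"
    by (simp add: numeral_eq_Suc)
  ultimately show ?case
    using Suc.IH by (simp add: algebra_simps)
qed simp

lemma zero_sum_count_bound:
  fixes T N P Z n :: nat
  assumes N: "2 \<le> N" and n: "N + P + Z = n"
    and T: "2 * T \<le> 2 * ((Z + 2) choose 3) + 2 * (N * P) + N * P * max (N - 1) (max (P - 1) (2 * Z))"
  shows "int T \<le> int ((n + 1) choose 3) - int n * int N + int n + cfun n"
proof -
  define M where "M = max (N - 1) (max (P - 1) (2 * Z))"
  have "6 * T \<le> (Z + 2) * (Z + 1) * Z + 6 * (N * P) + 3 * (N * P * M)"
    using T six_times_choose_3[of Z] unfolding M_def by linarith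
  then have "int (6 * T) \<le> int ((Z + 2) * (Z + 1) * Z + 6 * (N * P) + 3 * (N * P * M))"
    by (simp only: of_nat_le_iff)
  then have T6: "6 * int T \<le> int Z * (int Z + 1) * (int Z + 2) + 6 * int N * int P + 3 * int N * int P * int M"
    by (simp add: algebra_simps)
  have "6 * ((n + 1) choose 3) = (n + 1) * n * (n - 1)"
    using six_times_choose_3[of "n - 1"] N n by (simp add: algebra_simps)
  then have "int (6 * ((n + 1) choose 3)) = int ((n + 1) * n * (n - 1))"
    by (rule arg_cong)
  then have n6: "6 * int ((n + 1) choose 3) = (int n + 1) * int n * (int n - 1)"
    using N n by (simp add: of_nat_diff algebra_simps)
  have "int Z * (int Z + 1) * (int Z + 2) + 6 * int N * int P + 3 * int N * int P * int M
      \<le> (int n + 1) * int n * (int n - 1) - 6 * int n * int N + 6 * int n + 6 * cfun n"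
  proof (cases "5 \<le> n")
    case True
    have "int M = int N - 1 \<or> int M = int P - 1 \<or> int M = 2 * int Z"
      using N unfolding M_def by (auto simp: max_def of_nat_diff)
    then show ?thesis
      using cubic_bound[of "int N" "int P" "int Z" "int n" "int M"] N n True by (simp add: cfun_def)
  next
    case False
    then have "N \<in> {2, 3, 4}" "P \<in> {0, 1, 2}" "Z \<in> {0, 1, 2}"
      using N n by auto
    then show ?thesis
      using n unfolding M_def by (auto simp: cfun_def)
  qed
  then show ?thesis
    using T6 n6 by linarith
qed

theorem lemma3p2:
  fixes n :: nat and a :: "nat \<Rightarrow> real"
  assumes "n \<ge> 2" and "Nneg n a \<ge> 2"
  shows "int (Zmon n 3 (Japply n 2 (Japply n 1 (lin_vec n a))))
           \<le> int ((n + 1) choose 3) - int n * int (Nneg n a) + int n + cfun n"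
proof -
  have "Zmon n 3 (Japply n 2 (Japply n 1 (lin_vec n a))) \<le> card (zero_sum_triples n a)"
    unfolding Zmon_J2_J1_lin_vec zero_sum_triples_def by (rule card_mons_mon_dot_zero_le)
  moreover have "Nneg n a = card (negs n a)"
    by (simp add: Nneg_def negs_def)
  moreover have "int (card (zero_sum_triples n a))
      \<le> int ((n + 1) choose 3) - int n * int (card (negs n a)) + int n + cfun n"
    using assms(2) card_negs_poss_zeros card_zero_sum_triples_le
    by (intro zero_sum_count_bound) (simp_all add: Nneg_def negs_def)
  ultimately show ?thesis
    by simp
qed

end
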